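(* Let $f\in\mathbb{C}[x_1]$ have exactly $t$ monomial terms and suppose $\mathrm{ArchTrop}(f)$ has exactly $3$ points. Then $$\sup_{\sigma\in\mathrm{ArchTrop}(f)}\ \inf_{\rho\in\mathrm{Amoeba}(f)}|\rho-\sigma|\le1+3\log(t-1).$$
   Context: For $f(x_1)=\sum_{i=1}^tc_ix_1^{a_i}$ (distinct $a_i$, $c_i\ne0$), $\mathrm{ArchNewt}(f)=\mathrm{Conv}\{(a_i,-\log|c_i|)\}\subset\mathbb{R}^2$ and $\mathrm{ArchTrop}(f)$ is the set of $v\in\mathbb{R}$ such that $(v,-1)$ is an outer normal of an edge of $\mathrm{ArchNewt}(f)$ (the slopes of the lower edges). $\mathrm{Amoeba}(f)=\{\log|\zeta|:\zeta\in\mathbb{C}^*,f(\zeta)=0\}$. *)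

theory Defs
  imports "HOL-Analysis.Analysis" "HOL-Computational_Algebra.Polynomial"
begin

definition supp :: "complex poly \<Rightarrow> nat set" where
  "supp f = {i. coeff f i \<noteq> 0}"

definition ArchNewt :: "complex poly \<Rightarrow> (real \<times> real) set" where
  "ArchNewt f = convex hull ((\<lambda>i. (real i, - ln (cmod (coeff f i)))) ` supp f)"

text \<open>(v,-1) is an outer normal of an edge of ArchNewt f: the face of ArchNewt f
  on which the linear functional (x,y) |-> v*x - y attains its maximum contains
  two distinct points (hence, the polytope being at most 2-dimensional and the
  functional nonzero, is an edge).\<close>
definition ArchTrop :: "complex poly \<Rightarrow> real set" where
  "ArchTrop f = {v. \<exists>p\<in>ArchNewt f. \<exists>q\<in>ArchNewt f. p \<noteq> q \<and>
      (\<forall>r\<in>ArchNewt f. v * fst r - snd r \<le> v * fst p - snd p) \<and>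
      (\<forall>r\<in>ArchNewt f. v * fst r - snd r \<le> v * fst q - snd q)}"

definition Amoeba :: "complex poly \<Rightarrow> real set" where
  "Amoeba f = {ln (cmod z) | z. z \<noteq> 0 \<and> poly f z = 0}"

end

theory Submission
  imports Defs "HOL-Computational_Algebra.Fundamental_Theorem_Algebra"
begin

text \<open>Write \<open>f = \<Sum>\<^sub>i c\<^sub>i x\<^sup>i\<close>. On the circle \<open>|x| = exp u\<close> the \<open>i\<close>-th term has modulus
  \<open>exp (\<ell>\<^sub>i u)\<close> with \<open>\<ell>\<^sub>i u = ln |c\<^sub>i| + i u\<close>, and \<open>ArchTrop f\<close> is the set of breakpoints
  of \<open>max\<^sub>i \<ell>\<^sub>i\<close>. If one term is larger than the sum of all the others on a circle, then
  \<open>f\<close> has exactly as many roots inside as that monomial (Rouch\'e's theorem, proved here with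
  continuous logarithms), so two circles with different dominant terms enclose a root. A
  breakpoint separates the maximal terms on its two sides; hence it suffices to find a dominant
  term within distance \<open>1 + 3 ln (t - 1)\<close> on either side of every breakpoint. Away from the
  breakpoints the non-maximal terms decay geometrically, which gives dominance at distance about
  \<open>ln 3\<close> into a long enough gap between breakpoints, and at distance \<open>3/4\<close> beyond the last
  one; when both gaps are short and there are only four terms, the margins are computed
  explicitly.\<close>

section \<open>Continuous logarithms on circles and counting roots\<close>

definition continuous_log_on :: "complex set \<Rightarrow> (complex \<Rightarrow> complex) \<Rightarrow> bool" where
  "continuous_log_on S h \<longleftrightarrow> (\<exists>g. continuous_on S g \<and> (\<forall>y\<in>S. h y = exp (g y)))"

lemma continuous_log_on_mult:
  assumes "continuous_log_on S a" "continuous_log_on S b"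
  shows "continuous_log_on S (\<lambda>y. a y * b y)"
proof -
  obtain ga gb where "continuous_on S ga" "\<forall>y\<in>S. a y = exp (ga y)"
    "continuous_on S gb" "\<forall>y\<in>S. b y = exp (gb y)"
    using assms unfolding continuous_log_on_def by blast
  then show ?thesis unfolding continuous_log_on_def
    by (intro exI[of _ "\<lambda>y. ga y + gb y"]) (auto intro!: continuous_intros simp: exp_add)
qed

lemma continuous_log_on_inverse:
  assumes "continuous_log_on S a"
  shows "continuous_log_on S (\<lambda>y. inverse (a y))"
proof -
  obtain g where "continuous_on S g" "\<forall>y\<in>S. a y = exp (g y)"
    using assms unfolding continuous_log_on_def by blast
  then show ?thesis unfolding continuous_log_on_def
    by (intro exI[of _ "\<lambda>y. - g y"]) (auto intro!: continuous_intros simp: exp_minus)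
qed

lemma continuous_log_on_const: "c \<noteq> 0 \<Longrightarrow> continuous_log_on S (\<lambda>_. c)"
  unfolding continuous_log_on_def by (intro exI[of _ "\<lambda>_. Ln c"]) auto

lemma continuous_log_on_cong:
  "continuous_log_on S h \<Longrightarrow> (\<And>y. y \<in> S \<Longrightarrow> h y = h' y) \<Longrightarrow> continuous_log_on S h'"
  unfolding continuous_log_on_def by metis

lemma continuous_log_on_nonzero: "continuous_log_on S h \<Longrightarrow> y \<in> S \<Longrightarrow> h y \<noteq> 0"
  unfolding continuous_log_on_def by fastforce

lemma continuous_log_on_near_one:
  assumes "continuous_on S h" "\<And>y. y \<in> S \<Longrightarrow> norm (h y - 1) < 1"
  shows "continuous_log_on S h"
proof -
  have "h y \<notin> \<real>\<^sub>\<le>\<^sub>0" if "y \<in> S" for y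
  proof
    assume "h y \<in> \<real>\<^sub>\<le>\<^sub>0"
    then obtain r where "h y = of_real r" "r \<le> 0" by (auto elim: nonpos_Reals_cases)
    then have "norm (h y - 1) = \<bar>r - 1\<bar>"
      by (metis norm_of_real of_real_1 of_real_diff)
    with assms(2)[OF that] \<open>r \<le> 0\<close> show False by simp
  qed
  moreover from this have "h y \<noteq> 0" if "y \<in> S" for y
    using that by (metis nonpos_Reals_zero_I)
  ultimately show ?thesis unfolding continuous_log_on_def
    by (intro exI[of _ "\<lambda>y. Ln (h y)"]) (auto intro!: continuous_intros assms(1))
qed

lemma continuous_log_on_prod_mset:
  assumes "\<And>a. a \<in># M \<Longrightarrow> continuous_log_on S (F a)"
  shows "continuous_log_on S (\<lambda>y. \<Prod>a\<in>#M. F a y)"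
  using assms
proof (induction M)
  case empty
  then show ?case using continuous_log_on_const[of 1] by simp
next
  case (add a M)
  then show ?case by (simp add: continuous_log_on_mult)
qed

text \<open>A continuous logarithm of \<open>y ^ d\<close> differs from the branch \<open>d ln \<rho> + i d \<theta>\<close> at
  \<open>y = \<rho> e\<^sup>i\<^sup>\<theta>\<close> by a continuous function with values in \<open>2\<pi>i\<int>\<close>, hence by a constant;
  comparing \<open>\<theta> = 0\<close> with \<open>\<theta> = 2\<pi>\<close> gives \<open>2\<pi>i d = 0\<close>.\<close>
lemma no_continuous_log_power_circle:
  assumes "\<rho> > 0" "d > 0"
  shows "\<not> continuous_log_on (sphere 0 \<rho>) (\<lambda>y. y ^ d)"
proof
  assume "continuous_log_on (sphere 0 \<rho>) (\<lambda>y. y ^ d)"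
  then obtain g :: "complex \<Rightarrow> complex" where g_cont: "continuous_on (sphere 0 \<rho>) g"
    and g_exp: "\<And>y. y \<in> sphere 0 \<rho> \<Longrightarrow> y ^ d = exp (g y)"
    unfolding continuous_log_on_def by blast
  define F where
    "F \<theta> = g (of_real \<rho> * cis \<theta>) - of_real (real d * ln \<rho>) - \<i> * of_real (real d * \<theta>)"
    for \<theta> :: real
  have on_circle: "of_real \<rho> * cis \<theta> \<in> sphere 0 \<rho>" for \<theta>
    using assms(1) by (simp add: norm_mult)
  have F_cont: "continuous_on {0..2*pi} F"
    unfolding F_def
    by (intro continuous_intros continuous_on_compose2[OF g_cont]) (use on_circle in auto)
  have exp_F: "exp (F \<theta>) = 1" for \<theta>
  proof -
    have "exp (g (of_real \<rho> * cis \<theta>)) = (of_real \<rho> * cis \<theta>) ^ d"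
      using g_exp[OF on_circle] by simp
    also have "\<dots> = of_real (\<rho> ^ d) * cis (real d * \<theta>)"
      by (simp only: power_mult_distrib Complex.DeMoivre of_real_power)
    finally have a: "exp (g (of_real \<rho> * cis \<theta>)) = of_real (\<rho> ^ d) * cis (real d * \<theta>)" .
    have b: "exp (of_real (real d * ln \<rho>)) = of_real (\<rho> ^ d)"
      using assms(1) by (simp add: exp_of_real exp_ln flip: ln_realpow)
    have c: "exp (\<i> * of_real (real d * \<theta>)) = cis (real d * \<theta>)"
      by (simp add: cis_conv_exp)
    show ?thesis
      using assms(1) unfolding F_def exp_diff a b c by simp
  qed
  have F_int: "\<exists>n::int. F \<theta> = \<i> * of_real (2 * pi * n)" for \<theta>
  proof -
    from exp_F[of \<theta>] obtain n :: int where "Re (F \<theta>) = 0" "Im (F \<theta>) = of_int (2 * n) * pi"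
      unfolding exp_eq_1 by blast
    then show ?thesis by (intro exI[of _ n]) (simp add: complex_eq_iff)
  qed
  have "F constant_on {0..2*pi}"
  proof (rule continuous_discrete_range_constant[OF _ F_cont])
    fix x assume "x \<in> {0..2*pi}"
    show "\<exists>e>0. \<forall>y. y \<in> {0..2*pi} \<and> F y \<noteq> F x \<longrightarrow> e \<le> norm (F y - F x)"
    proof (intro exI[of _ "2*pi"] conjI allI impI)
      fix y assume "y \<in> {0..2*pi} \<and> F y \<noteq> F x"
      moreover obtain n m :: int where "F y = \<i> * of_real (2 * pi * n)" "F x = \<i> * of_real (2 * pi * m)"
        using F_int by blast
      ultimately have "n \<noteq> m" and "F y - F x = \<i> * of_real (2 * pi * of_int (n - m))"
        by (auto simp: algebra_simps)
      then have "1 \<le> \<bar>real_of_int (n - m)\<bar>" and "norm (F y - F x) = 2 * pi * \<bar>real_of_int (n - m)\<bar>"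
        by (simp_all only: norm_mult norm_ii norm_of_real abs_mult) simp_all
      then show "2*pi \<le> norm (F y - F x)" by (simp add: mult_le_cancel_left1)
    qed simp
  qed simp
  then have "F 0 = F (2*pi)" unfolding constant_on_def by auto
  then show False using assms(2) by (simp add: F_def)
qed

lemma continuous_log_on_power_eq:
  assumes "\<rho> > 0" "continuous_log_on (sphere 0 \<rho>) A" "continuous_log_on (sphere 0 \<rho>) B"
    and "\<And>y. y \<in> sphere 0 \<rho> \<Longrightarrow> y ^ m * A y = y ^ k * B y"
  shows "m = k"
proof -
  have False if "m < k" "continuous_log_on (sphere 0 \<rho>) A" "continuous_log_on (sphere 0 \<rho>) B"
    "\<And>y. y \<in> sphere 0 \<rho> \<Longrightarrow> y ^ m * A y = y ^ k * B y" for m k A B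
  proof -
    have "continuous_log_on (sphere 0 \<rho>) (\<lambda>y. A y * inverse (B y))"
      using that by (intro continuous_log_on_mult continuous_log_on_inverse)
    then have "continuous_log_on (sphere 0 \<rho>) (\<lambda>y. y ^ (k - m))"
    proof (rule continuous_log_on_cong)
      fix y :: complex assume y: "y \<in> sphere 0 \<rho>"
      have "y ^ m * A y = y ^ m * (y ^ (k - m) * B y)"
        using that(4)[OF y] that(1) by (simp add: power_add[symmetric])
      then show "A y * inverse (B y) = y ^ (k - m)"
        using y \<open>\<rho> > 0\<close> continuous_log_on_nonzero[OF that(3) y] by (auto simp: field_simps)
    qed
    then show False
      using no_continuous_log_power_circle[OF \<open>\<rho> > 0\<close>, of "k - m"] that(1) by simp
  qed
  then show ?thesis
    using assms by (metis linorder_neqE_nat)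
qed

lemma continuous_log_on_circle_factor_inside:
  assumes "norm a < r"
  shows "continuous_log_on (sphere 0 r) (\<lambda>y. (y - a) / y)"
proof (rule continuous_log_on_cong)
  show "continuous_log_on (sphere 0 r) (\<lambda>y. 1 - a / y)"
    using assms by (intro continuous_log_on_near_one continuous_intros)
      (auto simp: norm_divide divide_less_eq)
next
  fix y :: complex assume "y \<in> sphere 0 r"
  then have "y \<noteq> 0" using assms by auto
  then show "1 - a / y = (y - a) / y" by (simp add: field_simps)
qed

lemma continuous_log_on_circle_factor_outside:
  assumes "0 \<le> r" "r < norm a"
  shows "continuous_log_on (sphere 0 r) (\<lambda>y. y - a)"
proof (rule continuous_log_on_cong)
  have "a \<noteq> 0" using assms by auto
  then show "continuous_log_on (sphere 0 r) (\<lambda>y. (- a) * (1 - y / a))"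
    using assms by (intro continuous_log_on_mult continuous_log_on_const continuous_log_on_near_one
        continuous_intros) (auto simp: norm_divide divide_less_eq)
qed (use assms in \<open>auto simp: field_simps\<close>)

lemma poly_eq_prod_mset_proots:
  "poly p y = lead_coeff p * (\<Prod>a\<in>#proots p. y - a)" for p :: "complex poly"
  by (subst complex_poly_decompose_multiset[symmetric, of p]) (simp add: poly_prod_mset)

lemma prod_mset_linear_factors_eq:
  "y \<noteq> 0 \<Longrightarrow> (\<Prod>a\<in>#M. y - a) = y ^ size M * (\<Prod>a\<in>#M. (y - a) / y)" for y :: complex
  by (induction M) (simp_all add: field_simps)

text \<open>With \<open>m\<close> roots inside the circle, \<open>poly p y = y\<^sup>m A(y)\<close> where every factor of \<open>A\<close> has
  a continuous logarithm on the circle; dominance writes \<open>poly p y = y\<^sup>k B(y)\<close> with \<open>B\<close>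
  close to the constant \<open>c\<close>.\<close>
lemma dominant_monomial_counts_roots:
  fixes p :: "complex poly"
  assumes "r > 0"
    and dominant: "\<And>y. norm y = r \<Longrightarrow> norm (poly p y - c * y ^ k) < norm (c * y ^ k)"
  shows "k = size {#a \<in># proots p. norm a < r#}"
proof -
  let ?S = "sphere (0::complex) r"
  define ins where "ins = {#a \<in># proots p. norm a < r#}"
  define outs where "outs = {#a \<in># proots p. \<not> norm a < r#}"
  have no_root: "poly p y \<noteq> 0" if "norm y = r" for y
    using dominant[OF that] by auto
  have "poly p (of_real r) \<noteq> 0" using \<open>r > 0\<close> by (intro no_root) simp
  then have "p \<noteq> 0" by auto
  have c: "c \<noteq> 0" using dominant[of "of_real r"] \<open>r > 0\<close> by auto
  have outs_out: "r < norm a" if "a \<in># outs" for a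
    using that no_root \<open>p \<noteq> 0\<close> unfolding outs_def by force
  define A where "A y = lead_coeff p * (\<Prod>a\<in>#ins. (y - a) / y) * (\<Prod>a\<in>#outs. y - a)" for y
  have "continuous_log_on ?S A"
    unfolding A_def using \<open>p \<noteq> 0\<close> \<open>r > 0\<close> outs_out
    by (intro continuous_log_on_mult continuous_log_on_const continuous_log_on_prod_mset
        continuous_log_on_circle_factor_inside continuous_log_on_circle_factor_outside)
       (auto simp: ins_def)
  moreover have "continuous_log_on ?S (\<lambda>y. c * (poly p y / (c * y ^ k)))"
  proof (intro continuous_log_on_mult continuous_log_on_const continuous_log_on_near_one c)
    show "continuous_on ?S (\<lambda>y. poly p y / (c * y ^ k))"
      using c \<open>r > 0\<close> by (intro continuous_intros) auto
    fix y :: complex assume "y \<in> ?S"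
    then have "norm y = r" "c * y ^ k \<noteq> 0" using c \<open>r > 0\<close> by auto
    then have "poly p y / (c * y ^ k) - 1 = (poly p y - c * y ^ k) / (c * y ^ k)"
      by (simp add: field_simps)
    then show "norm (poly p y / (c * y ^ k) - 1) < 1"
      using dominant[OF \<open>norm y = r\<close>] \<open>c * y ^ k \<noteq> 0\<close> by (simp add: norm_divide divide_less_eq)
  qed
  moreover have "y ^ size ins * A y = y ^ k * (c * (poly p y / (c * y ^ k)))" if "y \<in> ?S" for y
  proof -
    have "y \<noteq> 0" using that \<open>r > 0\<close> by auto
    then have "y ^ size ins * A y = lead_coeff p * (\<Prod>a\<in>#ins + outs. y - a)"
      by (simp add: A_def prod_mset_linear_factors_eq[of y ins])
    also have "\<dots> = poly p y"
      by (simp add: ins_def outs_def poly_eq_prod_mset_proots flip: multiset_partition)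
    finally show ?thesis using \<open>y \<noteq> 0\<close> c by simp
  qed
  ultimately have "size ins = k"
    by (rule continuous_log_on_power_eq[OF \<open>r > 0\<close>])
  then show ?thesis unfolding ins_def by simp
qed

lemma root_between_dominant_monomials:
  fixes p :: "complex poly"
  assumes "0 < r" "r < r'" "k \<noteq> k'"
    and "\<And>y. norm y = r \<Longrightarrow> norm (poly p y - c * y ^ k) < norm (c * y ^ k)"
    and "\<And>y. norm y = r' \<Longrightarrow> norm (poly p y - c' * y ^ k') < norm (c' * y ^ k')"
  shows "\<exists>z. poly p z = 0 \<and> r \<le> norm z \<and> norm z \<le> r'"
proof (rule ccontr)
  assume no_root: "\<not> ?thesis"
  have "p \<noteq> 0" using assms(4)[of "of_real r"] \<open>0 < r\<close> by auto
  have "{#a \<in># proots p. norm a < r#} = {#a \<in># proots p. norm a < r'#}"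
  proof (rule filter_mset_cong)
    fix a assume "a \<in># proots p"
    then have "poly p a = 0" using \<open>p \<noteq> 0\<close> by simp
    then have "\<not> (r \<le> norm a \<and> norm a \<le> r')" using no_root by blast
    then show "norm a < r \<longleftrightarrow> norm a < r'" using \<open>r < r'\<close> by linarith
  qed simp
  moreover have "0 < r'" using assms(1,2) by simp
  ultimately show False
    using dominant_monomial_counts_roots[OF assms(1,4)] dominant_monomial_counts_roots[OF _ assms(5)]
      assms(3) by simp
qed

section \<open>Maximal and dominant terms of a tropical polynomial\<close>

definition trop_term :: "(int \<Rightarrow> real) \<Rightarrow> int \<Rightarrow> real \<Rightarrow> real" where
  "trop_term w i v = w i + of_int i * v"

definition max_term :: "int set \<Rightarrow> (int \<Rightarrow> real) \<Rightarrow> real \<Rightarrow> int \<Rightarrow> bool" where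
  "max_term S w v k \<longleftrightarrow> k \<in> S \<and> (\<forall>j\<in>S. trop_term w j v \<le> trop_term w k v)"

definition strict_max_term :: "int set \<Rightarrow> (int \<Rightarrow> real) \<Rightarrow> real \<Rightarrow> int \<Rightarrow> bool" where
  "strict_max_term S w v k \<longleftrightarrow> k \<in> S \<and> (\<forall>j\<in>S - {k}. trop_term w j v < trop_term w k v)"

definition breakpoints :: "int set \<Rightarrow> (int \<Rightarrow> real) \<Rightarrow> real set" where
  "breakpoints S w = {v. \<exists>i j. i \<noteq> j \<and> max_term S w v i \<and> max_term S w v j}"

definition dominant_term :: "int set \<Rightarrow> (int \<Rightarrow> real) \<Rightarrow> real \<Rightarrow> int \<Rightarrow> bool" where
  "dominant_term S w v k \<longleftrightarrow> k \<in> S \<and> (\<Sum>j\<in>S - {k}. exp (trop_term w j v)) < exp (trop_term w k v)"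

lemma trop_term_diff:
  "trop_term w i u - trop_term w j u = trop_term w i v - trop_term w j v + of_int (i - j) * (u - v)"
  unfolding trop_term_def by (simp add: algebra_simps)

lemma max_term_exists:
  assumes "finite S" "S \<noteq> {}"
  obtains k where "max_term S w v k"
proof -
  have "Max ((\<lambda>j. trop_term w j v) ` S) \<in> (\<lambda>j. trop_term w j v) ` S"
    using assms by simp
  then obtain k where "k \<in> S" "trop_term w k v = Max ((\<lambda>j. trop_term w j v) ` S)" by auto
  then show ?thesis using assms by (intro that) (auto simp: max_term_def)
qed

lemma max_term_mono:
  assumes "max_term S w v j" "max_term S w v' k" "v < v'"
  shows "j \<le> k"
proof (rule ccontr)
  assume "\<not> j \<le> k"
  then have "0 < of_int (j - k) * (v' - v)" using assms(3) by simp
  moreover have "trop_term w k v \<le> trop_term w j v" "trop_term w j v' \<le> trop_term w k v'"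
    using assms(1,2) unfolding max_term_def by auto
  ultimately show False using trop_term_diff[of w j v' k v] by linarith
qed

lemma closed_max_term: "closed {v. max_term S w v k}"
proof (cases "k \<in> S")
  case True
  have "{v. max_term S w v k} = (\<Inter>j\<in>S. {v. trop_term w j v \<le> trop_term w k v})"
    using True unfolding max_term_def by auto
  also have "closed \<dots>"
    unfolding trop_term_def by (intro closed_INT ballI closed_Collect_le continuous_intros)
  finally show ?thesis .
qed (simp add: max_term_def)

text \<open>On a connected set free of breakpoints the sets where the various terms are maximal
  are disjoint, closed and cover it, so one of them covers it.\<close>
lemma max_term_on_closure_of_gap:
  assumes "finite S" "connected I" "I \<inter> breakpoints S w = {}" "p \<in> I" "max_term S w p k"
    and "v \<in> closure I"
  shows "max_term S w v k"
proof -
  define M where "M j = {v. max_term S w v j}" for j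
  define B where "B = (\<Union>j\<in>S - {k}. M j)"
  have "closed (M k)" "closed B"
    unfolding M_def B_def using assms(1) by (auto intro!: closed_UN closed_max_term)
  moreover have "I \<subseteq> M k \<union> B"
  proof
    fix u assume "u \<in> I"
    obtain j where "max_term S w u j"
      using max_term_exists[OF assms(1)] assms(5) unfolding max_term_def by blast
    then show "u \<in> M k \<union> B" unfolding M_def B_def max_term_def by blast
  qed
  moreover have "M k \<inter> B \<inter> I = {}"
    using assms(3) unfolding M_def B_def breakpoints_def by blast
  moreover have "M k \<inter> I \<noteq> {}" using assms(4,5) unfolding M_def by blast
  ultimately have "I \<subseteq> M k"
    using assms(2) unfolding connected_closed by blast
  then have "closure I \<subseteq> M k" using \<open>closed (M k)\<close> by (rule closure_minimal)
  then show ?thesis using assms(6) unfolding M_def by blast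
qed

lemma strict_max_term_if_not_breakpoint:
  assumes "max_term S w v k" "v \<notin> breakpoints S w"
  shows "strict_max_term S w v k"
  unfolding strict_max_term_def
proof (intro conjI ballI)
  show "k \<in> S" using assms(1) unfolding max_term_def by simp
  fix j assume j: "j \<in> S - {k}"
  show "trop_term w j v < trop_term w k v"
  proof (rule ccontr)
    assume "\<not> ?thesis"
    then have "max_term S w v j" using assms(1) j unfolding max_term_def by force
    then show False using assms j unfolding breakpoints_def by blast
  qed
qed

lemma strict_max_term_if_dominant:
  assumes "finite S" "dominant_term S w v k"
  shows "strict_max_term S w v k"
  unfolding strict_max_term_def
proof (intro conjI ballI)
  show "k \<in> S" using assms(2) unfolding dominant_term_def by simp
  fix j assume "j \<in> S - {k}"
  then have "exp (trop_term w j v) \<le> (\<Sum>i\<in>S - {k}. exp (trop_term w i v))"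
    using assms(1) by (intro member_le_sum) auto
  also have "\<dots> < exp (trop_term w k v)" using assms(2) unfolding dominant_term_def by simp
  finally show "trop_term w j v < trop_term w k v" by simp
qed

text \<open>At a breakpoint some term ties with \<open>k\<close>; as the difference of the two terms is affine,
  it cannot be negative on both sides.\<close>
lemma strict_max_terms_differ_across_breakpoint:
  assumes "\<sigma> \<in> breakpoints S w" "u < \<sigma>" "\<sigma> < u'"
    and "strict_max_term S w u k" "strict_max_term S w u' k'"
  shows "k \<noteq> k'"
proof
  assume "k = k'"
  obtain i j where "i \<noteq> j" "max_term S w \<sigma> i" "max_term S w \<sigma> j"
    using assms(1) unfolding breakpoints_def by blast
  then obtain h where h: "h \<noteq> k" "max_term S w \<sigma> h"
    by (metis (full_types))
  have "h \<in> S" "k \<in> S" using h(2) assms(4) unfolding max_term_def strict_max_term_def by auto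
  then have "trop_term w k \<sigma> \<le> trop_term w h \<sigma>"
    "trop_term w h u < trop_term w k u" "trop_term w h u' < trop_term w k u'"
    using h assms(4,5) \<open>k = k'\<close> unfolding max_term_def strict_max_term_def by auto
  moreover have "of_int (h - k) * (\<sigma> - u) \<le> 0 \<or> of_int (h - k) * (\<sigma> - u') \<le> 0"
    using assms(2,3) by (cases "h \<le> k") (auto simp: mult_nonpos_nonneg mult_nonneg_nonpos)
  ultimately show False
    using trop_term_diff[of w h \<sigma> k u] trop_term_diff[of w h \<sigma> k u'] by linarith
qed

lemma max_term_eventually_imp_greatest:
  assumes "\<And>v. v \<ge> s \<Longrightarrow> max_term S w v k" "i \<in> S"
  shows "i \<le> k"
proof (rule ccontr)
  assume "\<not> i \<le> k"
  define v where "v = max s 0 + \<bar>w k - w i\<bar> + 1"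
  have "1 * v \<le> of_int (i - k) * v"
    using \<open>\<not> i \<le> k\<close> by (intro mult_right_mono) (auto simp: v_def)
  moreover have "w k - w i < v" unfolding v_def by linarith
  ultimately have "trop_term w k v < trop_term w i v"
    unfolding trop_term_def by (simp add: left_diff_distrib)
  moreover have "v \<ge> s" unfolding v_def by simp
  ultimately show False using assms unfolding max_term_def by (meson not_le)
qed

lemma trop_term_le_if_max_term_left:
  assumes "max_term S w (u - x) k" "j \<in> S"
  shows "trop_term w j u \<le> trop_term w k u - of_int (k - j) * x"
proof -
  have "trop_term w j (u - x) \<le> trop_term w k (u - x)" using assms unfolding max_term_def by simp
  moreover have "of_int (j - k) * (u - (u - x)) = - (of_int (k - j) * x)" by (simp add: algebra_simps)
  ultimately show ?thesis using trop_term_diff[of w j u k "u - x"] by linarith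
qed

lemma trop_term_le_if_max_term_right:
  assumes "max_term S w (u + y) k" "j \<in> S"
  shows "trop_term w j u \<le> trop_term w k u - of_int (j - k) * y"
proof -
  have "trop_term w j (u + y) \<le> trop_term w k (u + y)" using assms unfolding max_term_def by simp
  moreover have "of_int (j - k) * (u - (u + y)) = - (of_int (j - k) * y)" by (simp add: algebra_simps)
  ultimately show ?thesis using trop_term_diff[of w j u k "u + y"] by linarith
qed

lemma dominant_term_if_margins:
  assumes "finite S" "k \<in> S"
    and "\<And>j. j \<in> S - {k} \<Longrightarrow> trop_term w j v \<le> trop_term w k v - m j"
    and "(\<Sum>j\<in>S - {k}. exp (- m j)) < 1"
  shows "dominant_term S w v k"
proof -
  have "(\<Sum>j\<in>S - {k}. exp (trop_term w j v)) \<le> (\<Sum>j\<in>S - {k}. exp (trop_term w k v) * exp (- m j))"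
    by (rule sum_mono) (use assms(3) in \<open>simp flip: exp_add\<close>)
  also have "\<dots> = exp (trop_term w k v) * (\<Sum>j\<in>S - {k}. exp (- m j))"
    by (simp add: sum_distrib_left)
  also have "\<dots> < exp (trop_term w k v) * 1"
    using assms(4) by (intro mult_strict_left_mono) auto
  finally show ?thesis using assms(2) unfolding dominant_term_def by simp
qed

lemma sum_exp_neg_distinct_multiples_le:
  fixes d :: "'a \<Rightarrow> int" and z :: real
  assumes "finite A" "inj_on d A" "\<And>i. i \<in> A \<Longrightarrow> d i > 0" "z > 0"
  shows "(\<Sum>i\<in>A. exp (- (of_int (d i) * z))) \<le> 1 / (exp z - 1)"
proof -
  define q where "q = exp (- z)"
  have q: "0 < q" "q < 1" unfolding q_def using assms(4) by auto
  define n where "n i = nat (d i - 1)" for i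
  have "exp (- (of_int (d i) * z)) = q ^ Suc (n i)" if "i \<in> A" for i
  proof -
    have "of_int (d i) = real (Suc (n i))" using assms(3)[OF that] unfolding n_def by simp
    then have "exp (- (of_int (d i) * z)) = exp (real (Suc (n i)) * (- z))" by simp
    also have "\<dots> = q ^ Suc (n i)" unfolding q_def by (rule exp_of_nat_mult)
    finally show ?thesis .
  qed
  then have "(\<Sum>i\<in>A. exp (- (of_int (d i) * z))) = (\<Sum>i\<in>A. q ^ Suc (n i))" by simp
  also have "\<dots> = (\<Sum>m\<in>n ` A. q ^ Suc m)"
  proof (rule sum.reindex[symmetric, unfolded comp_def])
    show "inj_on n A"
    proof (rule inj_onI)
      fix i j assume "i \<in> A" "j \<in> A" "n i = n j"
      then have "d i = d j" using assms(3) unfolding n_def by (simp add: eq_nat_nat_iff)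
      then show "i = j" using assms(2) \<open>i \<in> A\<close> \<open>j \<in> A\<close> by (simp add: inj_on_def)
    qed
  qed
  also have "\<dots> \<le> (\<Sum>m. q ^ Suc m)"
    by (rule sum_le_suminf) (use q assms(1) in \<open>simp_all add: summable_mult\<close>)
  also have "\<dots> = q / (1 - q)"
    using suminf_mult[of "\<lambda>m. q ^ m" q] q suminf_geometric[of q] summable_geometric[of q] by simp
  also have "\<dots> = 1 / (exp z - 1)"
    unfolding q_def using assms(4) by (simp add: exp_minus field_simps)
  finally show ?thesis .
qed

lemma dominant_term_if_greatest:
  assumes "finite S" "max_term S w (u - x) k" "\<And>j. j \<in> S \<Longrightarrow> j \<le> k" "exp x > 2"
  shows "dominant_term S w u k"
proof (rule dominant_term_if_margins)
  show "k \<in> S" using assms(2) unfolding max_term_def by simp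
  have "1 < exp x" using assms(4) by linarith
  then have "x > 0" by simp
  have "(\<Sum>j\<in>S - {k}. exp (- (of_int (k - j) * x))) \<le> 1 / (exp x - 1)"
    using assms(1,3) \<open>x > 0\<close>
    by (intro sum_exp_neg_distinct_multiples_le) (auto simp: inj_on_def order.order_iff_strict)
  also have "\<dots> < 1" using assms(4) \<open>x > 0\<close> by (simp add: divide_less_eq)
  finally show "(\<Sum>j\<in>S - {k}. exp (- (of_int (k - j) * x))) < 1" .
qed (use assms trop_term_le_if_max_term_left in auto)

lemma dominant_term_if_max_on_both_sides:
  assumes "finite S" "max_term S w (u - x) k" "max_term S w (u + y) k" "exp x > 3" "exp y > 3"
  shows "dominant_term S w u k"
proof (rule dominant_term_if_margins)
  define m where "m j = (if j < k then of_int (k - j) * x else of_int (j - k) * y)" for j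
  show "k \<in> S" using assms(2) unfolding max_term_def by simp
  show "trop_term w j u \<le> trop_term w k u - m j" if "j \<in> S - {k}" for j
    using that trop_term_le_if_max_term_left[OF assms(2)] trop_term_le_if_max_term_right[OF assms(3)]
    unfolding m_def by auto
  have "1 < exp x" "1 < exp y" using assms(4,5) by linarith+
  then have "x > 0" "y > 0" by simp_all
  have split: "S - {k} = {j\<in>S. j < k} \<union> {j\<in>S. k < j}" by auto
  have "(\<Sum>j\<in>S - {k}. exp (- m j))
      = (\<Sum>j\<in>{j\<in>S. j < k}. exp (- m j)) + (\<Sum>j\<in>{j\<in>S. k < j}. exp (- m j))"
    unfolding split using assms(1) by (intro sum.union_disjoint) auto
  also have "\<dots> = (\<Sum>j\<in>{j\<in>S. j < k}. exp (- (of_int (k - j) * x)))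
      + (\<Sum>j\<in>{j\<in>S. k < j}. exp (- (of_int (j - k) * y)))"
    unfolding m_def by (intro arg_cong2[where f = "(+)"] sum.cong) auto
  also have "\<dots> \<le> 1 / (exp x - 1) + 1 / (exp y - 1)"
    using assms(1) \<open>x > 0\<close> \<open>y > 0\<close>
    by (intro add_mono sum_exp_neg_distinct_multiples_le) (auto simp: inj_on_def)
  also have "\<dots> < 1/2 + 1/2"
    using assms(4,5) \<open>x > 0\<close> \<open>y > 0\<close> by (intro add_strict_mono) (simp_all add: divide_less_eq)
  finally show "(\<Sum>j\<in>S - {k}. exp (- m j)) < 1" by simp
qed (use assms(1) in simp)

lemma dominant_term_in_long_interval:
  assumes "finite S" "max_term S w a k" "max_term S w b k" "b - a > 2 * ln 3"
  obtains u where "a < u" "u \<le> a + ln 3 + 1/2" "dominant_term S w u k"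
proof -
  define e where "e = min (1/2) ((b - a - 2 * ln 3) / 2)"
  have "e \<le> 1/2" "e \<le> (b - a - 2 * ln 3) / 2"
    unfolding e_def by (rule min.cobounded1, rule min.cobounded2)
  moreover have "0 < e" using assms(4) unfolding e_def by simp
  ultimately have e: "0 < e" "e \<le> 1/2" "e < b - a - 2 * ln 3" by auto
  define u where "u = a + ln 3 + e"
  have "dominant_term S w u k"
  proof (rule dominant_term_if_max_on_both_sides[OF assms(1), where x = "ln 3 + e" and y = "b - u"])
    show "max_term S w (u - (ln 3 + e)) k" "max_term S w (u + (b - u)) k"
      using assms(2,3) unfolding u_def by simp_all
    show "3 < exp (ln 3 + e)" using \<open>0 < e\<close> by (simp add: exp_add)
    have "ln 3 < b - u" unfolding u_def using e by simp
    then show "3 < exp (b - u)" by (metis exp_less_mono exp_ln zero_less_numeral)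
  qed
  moreover have "a < u" "u \<le> a + ln 3 + 1/2"
  proof -
    have "0 < ln (3::real)" by simp
    then show "a < u" "u \<le> a + ln 3 + 1/2" unfolding u_def using e by linarith+
  qed
  ultimately show ?thesis using that by blast
qed

lemma max_terms_tie: "max_term S w v a \<Longrightarrow> max_term S w v b \<Longrightarrow> trop_term w a v = trop_term w b v"
  unfolding max_term_def by (meson order_antisym)

lemma trop_term_le_after_tie:
  assumes "trop_term w a \<sigma> = trop_term w b \<sigma>" "a < b" "\<sigma> \<le> u"
  shows "trop_term w a u \<le> trop_term w b u - (u - \<sigma>)"
proof -
  have "of_int (a - b) * (u - \<sigma>) \<le> -1 * (u - \<sigma>)" using assms(2,3) by (intro mult_right_mono) auto
  then show ?thesis using trop_term_diff[of w a u b \<sigma>] assms(1) by (smt (verit))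
qed

lemma trop_term_le_before_tie:
  assumes "trop_term w a \<sigma> = trop_term w b \<sigma>" "b < a" "u \<le> \<sigma>"
  shows "trop_term w a u \<le> trop_term w b u - (\<sigma> - u)"
proof -
  have "of_int (a - b) * (u - \<sigma>) \<le> 1 * (u - \<sigma>)" using assms(2,3) by (intro mult_right_mono_neg) auto
  then show ?thesis using trop_term_diff[of w a u b \<sigma>] assms(1) by (smt (verit))
qed

lemma dominant_term_of_four:
  assumes "S = {a, b, c, k}" "distinct [a, b, c, k]"
    and "trop_term w a u \<le> trop_term w k u - p" "trop_term w b u \<le> trop_term w k u - q"
      "trop_term w c u \<le> trop_term w k u - r"
    and "exp (- p) + exp (- q) + exp (- r) < 1"
  shows "dominant_term S w u k"
proof (rule dominant_term_if_margins[where m = "\<lambda>j. if j = a then p else if j = b then q else r"])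
  have "S - {k} = {a, b, c}" using assms(1,2) by auto
  then show "(\<Sum>j\<in>S - {k}. exp (- (if j = a then p else if j = b then q else r))) < 1"
    using assms(2,6) by (simp add: add.assoc)
qed (use assms in auto)

section \<open>Three breakpoints\<close>

lemma exp_three_quarters_gt_two: "exp (3/4 :: real) > 2"
proof -
  have "1 + 3/4 + (3/4)^2/2 \<le> exp (3/4 :: real)" by (rule exp_lower_Taylor_quadratic) simp
  then show ?thesis by (simp add: power2_eq_square)
qed

lemma exp_neg_one_plus_exp_neg_two_lt_one: "exp (- 1) + exp (- 2) + exp (- 2) < (1 :: real)"
proof -
  have "1 + 1 + 1^2/2 \<le> exp (1 :: real)" by (rule exp_lower_Taylor_quadratic) simp
  then have "2 < exp (1 :: real)" by simp
  moreover have "exp (- 1) = 1 / exp (1 :: real)" by (simp add: exp_minus divide_inverse)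
  ultimately have a: "exp (- 1) < (1/2 :: real)" by (simp add: divide_less_eq)
  have "exp (- 2 :: real) = exp (- 1) ^ 2" by (subst exp_of_nat_mult[symmetric]) simp
  also have "\<dots> < (1/2) ^ 2" using a by (intro power_strict_mono) auto
  finally show ?thesis using a by (simp add: power2_eq_square)
qed

lemma ln_four_bound: "4 * ln 3 + 3/4 \<le> 1 + 3 * ln (4 :: real)"
proof -
  have "1 + 1/4 + (1/4)^2/2 \<le> exp (1/4 :: real)" by (rule exp_lower_Taylor_quadratic) simp
  then have "81/64 \<le> exp (1/4 :: real)" by (simp add: power2_eq_square)
  then have "ln (81/64) \<le> ln (exp (1/4 :: real))" by (subst ln_le_cancel_iff) auto
  then have "ln (81/64) \<le> (1/4 :: real)" by simp
  moreover have "ln (81/64 :: real) = 4 * ln 3 - 3 * ln 4"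
  proof -
    have "ln (81/64 :: real) = ln (3 ^ 4) - ln (4 ^ 3)" by (simp add: ln_div)
    then show ?thesis by (simp only: ln_realpow)
  qed
  ultimately show ?thesis by simp
qed

lemma two_exp_neg_half_plus_exp_neg_lt_one:
  fixes g r :: real
  assumes "g > 3/2 * ln 3" "r > 3 * ln 3"
  shows "exp (- r) + exp (- (g/2)) + exp (- (g/2)) < 1"
proof -
  have "exp (3 * ln 3) = exp (ln (3 :: real)) ^ 3" by (subst exp_of_nat_mult[symmetric]) simp
  then have e27: "exp (- (3 * ln 3)) = (1/27 :: real)" by (simp add: exp_minus)
  define q where "q = exp (- (g/2))"
  have "q ^ 4 = exp (real 4 * (- (g/2)))" unfolding q_def by (rule exp_of_nat_mult[symmetric])
  also have "\<dots> < exp (- (3 * ln 3))" using assms(1) by simp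
  finally have q4: "q ^ 4 < 1/27" using e27 by simp
  have "q < 13/27"
  proof (rule ccontr)
    assume "\<not> q < 13/27"
    then have "(13/27 :: real) ^ 4 \<le> q ^ 4" by (intro power_mono) auto
    then show False using q4 by (simp add: power_divide)
  qed
  moreover have "exp (- r) < 1/27" using assms(2) e27 by (metis exp_less_mono neg_less_iff_less)
  ultimately show ?thesis unfolding q_def by simp
qed

text \<open>\<open>V0, \<dots>, V3\<close> are the terms maximal on the four intervals cut out by the breakpoints
  \<open>\<sigma>1 < \<sigma>2 < \<sigma>3\<close>.\<close>

locale three_breakpoints =
  fixes S :: "int set" and w :: "int \<Rightarrow> real" and \<sigma>1 \<sigma>2 \<sigma>3 :: real
  assumes finite_S: "finite S"
    and breakpoints_eq: "breakpoints S w = {\<sigma>1, \<sigma>2, \<sigma>3}"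
    and \<sigma>_less: "\<sigma>1 < \<sigma>2" "\<sigma>2 < \<sigma>3"
begin

lemma S_nonempty: "S \<noteq> {}"
  using breakpoints_eq unfolding breakpoints_def max_term_def by blast

definition max_term_at :: "real \<Rightarrow> int" where
  "max_term_at v = (SOME k. max_term S w v k)"

lemma max_term_max_term_at: "max_term S w v (max_term_at v)"
  unfolding max_term_at_def using max_term_exists[OF finite_S S_nonempty] by (metis someI)

abbreviation "V0 \<equiv> max_term_at (\<sigma>1 - 1)"
abbreviation "V1 \<equiv> max_term_at ((\<sigma>1 + \<sigma>2) / 2)"
abbreviation "V2 \<equiv> max_term_at ((\<sigma>2 + \<sigma>3) / 2)"
abbreviation "V3 \<equiv> max_term_at (\<sigma>3 + 1)"

lemma max_term_on_gap:
  assumes "connected I" "I \<inter> {\<sigma>1, \<sigma>2, \<sigma>3} = {}" "p \<in> I" "v \<in> closure I"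
  shows "max_term S w v (max_term_at p)"
  using assms breakpoints_eq
  by (intro max_term_on_closure_of_gap[OF finite_S _ _ _ max_term_max_term_at]) simp_all

lemma max_term_V0: "v \<le> \<sigma>1 \<Longrightarrow> max_term S w v V0"
  using \<sigma>_less by (intro max_term_on_gap[where I = "{..<\<sigma>1}"]) auto

lemma max_term_V1: "\<sigma>1 \<le> v \<Longrightarrow> v \<le> \<sigma>2 \<Longrightarrow> max_term S w v V1"
  using \<sigma>_less by (intro max_term_on_gap[where I = "{\<sigma>1<..<\<sigma>2}"]) auto

lemma max_term_V2: "\<sigma>2 \<le> v \<Longrightarrow> v \<le> \<sigma>3 \<Longrightarrow> max_term S w v V2"
  using \<sigma>_less by (intro max_term_on_gap[where I = "{\<sigma>2<..<\<sigma>3}"]) auto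

lemma max_term_V3: "\<sigma>3 \<le> v \<Longrightarrow> max_term S w v V3"
  using \<sigma>_less by (intro max_term_on_gap[where I = "{\<sigma>3<..}"]) auto

lemma max_term_at_less:
  assumes "p < \<sigma>" "\<sigma> < p'" "\<sigma> \<in> {\<sigma>1, \<sigma>2, \<sigma>3}" "p \<notin> {\<sigma>1, \<sigma>2, \<sigma>3}" "p' \<notin> {\<sigma>1, \<sigma>2, \<sigma>3}"
  shows "max_term_at p < max_term_at p'"
proof -
  have "max_term_at p \<le> max_term_at p'"
    using max_term_mono[OF max_term_max_term_at max_term_max_term_at] assms(1,2) by simp
  moreover have "strict_max_term S w p (max_term_at p)" "strict_max_term S w p' (max_term_at p')"
    using assms(4,5) breakpoints_eq
    by (auto intro!: strict_max_term_if_not_breakpoint max_term_max_term_at)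
  with assms(1-3) have "max_term_at p \<noteq> max_term_at p'"
    using breakpoints_eq by (intro strict_max_terms_differ_across_breakpoint) auto
  ultimately show ?thesis by simp
qed

lemma V_less: "V0 < V1" "V1 < V2" "V2 < V3"
  using \<sigma>_less
  by (auto intro: max_term_at_less[of _ \<sigma>1] max_term_at_less[of _ \<sigma>2] max_term_at_less[of _ \<sigma>3])

lemma V_greatest: "i \<in> S \<Longrightarrow> i \<le> V3"
  using max_term_eventually_imp_greatest[OF max_term_V3] .

lemma V_in_S: "{V0, V1, V2, V3} \<subseteq> S"
  using max_term_max_term_at unfolding max_term_def by auto

lemma card_S_ge_4: "card S \<ge> 4"
proof -
  have "card {V0, V1, V2, V3} = 4" using V_less by auto
  then show ?thesis using card_mono[OF finite_S V_in_S] by simp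
qed

lemma V_ties:
  "trop_term w V0 \<sigma>1 = trop_term w V1 \<sigma>1"
  "trop_term w V1 \<sigma>2 = trop_term w V2 \<sigma>2"
  "trop_term w V2 \<sigma>3 = trop_term w V3 \<sigma>3"
  using \<sigma>_less by (auto intro!: max_terms_tie max_term_V0 max_term_V1 max_term_V2 max_term_V3)

definition dominant_within :: "real \<Rightarrow> real \<Rightarrow> bool" where
  "dominant_within \<sigma> d \<longleftrightarrow> (\<exists>u k. \<sigma> < u \<and> u \<le> \<sigma> + d \<and> dominant_term S w u k)"

lemma dominant_withinI: "\<sigma> < u \<Longrightarrow> u \<le> \<sigma> + d \<Longrightarrow> dominant_term S w u k \<Longrightarrow> dominant_within \<sigma> d"
  unfolding dominant_within_def by blast

lemma dominant_within_shift:
  assumes "dominant_within \<sigma>' d" "\<sigma> \<le> \<sigma>'" "\<sigma>' - \<sigma> + d \<le> d'"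
  shows "dominant_within \<sigma> d'"
proof -
  obtain u k where "\<sigma>' < u" "u \<le> \<sigma>' + d" "dominant_term S w u k"
    using assms(1) unfolding dominant_within_def by blast
  then show ?thesis using assms(2,3) by (intro dominant_withinI) simp_all
qed

lemma dominant_within_mono: "dominant_within \<sigma> d \<Longrightarrow> d \<le> d' \<Longrightarrow> dominant_within \<sigma> d'"
  by (erule dominant_within_shift) simp_all

lemma dominant_within_\<sigma>3: "dominant_within \<sigma>3 (3/4)"
proof (rule dominant_withinI)
  show "dominant_term S w (\<sigma>3 + 3/4) V3"
    using exp_three_quarters_gt_two max_term_V3[of \<sigma>3]
    by (intro dominant_term_if_greatest[OF finite_S _ V_greatest, where x = "3/4"]) simp_all
qed simp_all

lemma dominant_within_long_gap:
  assumes "\<sigma> \<le> \<sigma>'" "\<And>v. \<sigma> \<le> v \<Longrightarrow> v \<le> \<sigma>' \<Longrightarrow> max_term S w v k" "\<sigma>' - \<sigma> > 2 * ln 3"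
  shows "dominant_within \<sigma> (ln 3 + 1/2)"
  using dominant_term_in_long_interval[OF finite_S assms(2,2) assms(3)] assms(1)
  by (metis add.assoc dominant_withinI order.refl)

lemma dominant_within_\<sigma>2: "dominant_within \<sigma>2 (2 * ln 3 + 3/4)"
proof (cases "\<sigma>3 - \<sigma>2 > 2 * ln 3")
  case True
  have "0 < ln (3 :: real)" by simp
  from True have "dominant_within \<sigma>2 (ln 3 + 1/2)"
    using \<sigma>_less by (intro dominant_within_long_gap[OF _ max_term_V2]) simp_all
  then show ?thesis by (rule dominant_within_shift) (use \<open>0 < ln 3\<close> in linarith)+
next
  case False
  show ?thesis by (rule dominant_within_shift[OF dominant_within_\<sigma>3]) (use False \<sigma>_less in simp_all)
qed

lemma dominant_within_\<sigma>1_long_gap: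
  assumes "\<sigma>2 - \<sigma>1 > 2 * ln 3 \<or> \<sigma>3 - \<sigma>2 > 2 * ln 3"
  shows "dominant_within \<sigma>1 (3 * ln 3 + 1/2)"
proof (cases "\<sigma>2 - \<sigma>1 > 2 * ln 3")
  case True
  have "0 < ln (3 :: real)" by simp
  from True have "dominant_within \<sigma>1 (ln 3 + 1/2)"
    using \<sigma>_less by (intro dominant_within_long_gap[OF _ max_term_V1]) simp_all
  then show ?thesis by (rule dominant_within_shift) (use \<open>0 < ln 3\<close> in linarith)+
next
  case False
  with assms have "dominant_within \<sigma>2 (ln 3 + 1/2)"
    using \<sigma>_less by (intro dominant_within_long_gap[OF _ max_term_V2]) simp_all
  then show ?thesis using False \<sigma>_less by (elim dominant_within_shift) simp_all
qed

lemma dominant_within_\<sigma>1_short_gaps: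
  assumes "\<sigma>2 - \<sigma>1 \<le> 2 * ln 3" "\<sigma>3 - \<sigma>2 \<le> 2 * ln 3"
  shows "dominant_within \<sigma>1 (4 * ln 3 + 3/4)"
  by (rule dominant_within_shift[OF dominant_within_\<sigma>3]) (use assms \<sigma>_less in simp_all)

text \<open>With four terms only, the margins at a suitable point can be read off from the three
  ties; here the geometric-series bounds would be too weak.\<close>

lemma four_terms_margins:
  fixes u :: real
  shows "\<sigma>1 \<le> u \<Longrightarrow> trop_term w V0 u \<le> trop_term w V1 u - (u - \<sigma>1)"
    and "\<sigma>2 \<le> u \<Longrightarrow> trop_term w V1 u \<le> trop_term w V2 u - (u - \<sigma>2)"
    and "\<sigma>3 \<le> u \<Longrightarrow> trop_term w V2 u \<le> trop_term w V3 u - (u - \<sigma>3)"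
    and "u \<le> \<sigma>2 \<Longrightarrow> trop_term w V2 u \<le> trop_term w V1 u - (\<sigma>2 - u)"
    and "u \<le> \<sigma>3 \<Longrightarrow> trop_term w V3 u \<le> trop_term w V2 u - (\<sigma>3 - u)"
  using V_ties V_less
  by (auto intro: trop_term_le_after_tie trop_term_le_before_tie[OF sym])

lemma dominant_four_terms_V3:
  assumes "S = {V0, V1, V2, V3}"
  shows "dominant_term S w (\<sigma>3 + 1) V3"
  using assms V_less \<sigma>_less exp_neg_one_plus_exp_neg_two_lt_one
    four_terms_margins(1-3)[of "\<sigma>3 + 1"]
  by (intro dominant_term_of_four[where p = 2 and q = 2 and r = 1]) auto

lemma dominant_four_terms_V2:
  assumes "S = {V0, V1, V2, V3}" "\<sigma>2 - \<sigma>1 \<le> \<sigma>3 - \<sigma>2" "\<sigma>3 - \<sigma>1 > 3 * ln 3"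
  shows "dominant_term S w ((\<sigma>2 + \<sigma>3) / 2) V2"
proof (rule dominant_term_of_four[where p = "\<sigma>3 - \<sigma>1" and q = "(\<sigma>3 - \<sigma>2) / 2" and r = "(\<sigma>3 - \<sigma>2) / 2"])
  show "S = {V0, V1, V3, V2}" "distinct [V0, V1, V3, V2]" using assms(1) V_less by auto
  show "exp (- (\<sigma>3 - \<sigma>1)) + exp (- ((\<sigma>3 - \<sigma>2) / 2)) + exp (- ((\<sigma>3 - \<sigma>2) / 2)) < 1"
    using assms(2,3) by (intro two_exp_neg_half_plus_exp_neg_lt_one) simp_all
qed (use \<sigma>_less four_terms_margins(1,2,5)[of "(\<sigma>2 + \<sigma>3) / 2"] in \<open>simp_all add: field_simps\<close>)

lemma dominant_four_terms_V1:
  assumes "S = {V0, V1, V2, V3}" "\<sigma>3 - \<sigma>2 < \<sigma>2 - \<sigma>1" "\<sigma>3 - \<sigma>1 > 3 * ln 3"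
  shows "dominant_term S w ((\<sigma>1 + \<sigma>2) / 2) V1"
proof (rule dominant_term_of_four[where p = "(\<sigma>2 - \<sigma>1) / 2" and q = "(\<sigma>2 - \<sigma>1) / 2" and r = "\<sigma>3 - \<sigma>1"])
  show "S = {V0, V2, V3, V1}" "distinct [V0, V2, V3, V1]" using assms(1) V_less by auto
  have "exp (- (\<sigma>3 - \<sigma>1)) + exp (- ((\<sigma>2 - \<sigma>1) / 2)) + exp (- ((\<sigma>2 - \<sigma>1) / 2)) < 1"
    using assms(2,3) by (intro two_exp_neg_half_plus_exp_neg_lt_one) simp_all
  then show "exp (- ((\<sigma>2 - \<sigma>1) / 2)) + exp (- ((\<sigma>2 - \<sigma>1) / 2)) + exp (- (\<sigma>3 - \<sigma>1)) < 1"
    by simp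
qed (use \<sigma>_less four_terms_margins(1,4,5)[of "(\<sigma>1 + \<sigma>2) / 2"] in \<open>simp_all add: field_simps\<close>)

lemma dominant_within_\<sigma>1_four_terms:
  assumes "S = {V0, V1, V2, V3}" "\<sigma>2 - \<sigma>1 \<le> 2 * ln 3" "\<sigma>3 - \<sigma>2 \<le> 2 * ln 3"
  shows "dominant_within \<sigma>1 (1 + 3 * ln 3)"
proof -
  consider "\<sigma>3 - \<sigma>1 \<le> 3 * ln 3"
    | "\<sigma>3 - \<sigma>1 > 3 * ln 3" "\<sigma>2 - \<sigma>1 \<le> \<sigma>3 - \<sigma>2"
    | "\<sigma>3 - \<sigma>1 > 3 * ln 3" "\<sigma>3 - \<sigma>2 < \<sigma>2 - \<sigma>1"
    by linarith
  then show ?thesis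
  proof cases
    case 1
    then show ?thesis using dominant_four_terms_V3[OF assms(1)] \<sigma>_less
      by (intro dominant_withinI) simp_all
  next
    case 2
    then show ?thesis using dominant_four_terms_V2[OF assms(1)] assms(2,3) \<sigma>_less
      by (intro dominant_withinI) simp_all
  next
    case 3
    moreover have "0 < ln (3 :: real)" by simp
    ultimately show ?thesis using dominant_four_terms_V1[OF assms(1)] assms(2) \<sigma>_less
      by (intro dominant_withinI) simp_all
  qed
qed

lemma dominant_within_breakpoint:
  assumes "\<sigma> \<in> {\<sigma>1, \<sigma>2, \<sigma>3}"
  shows "dominant_within \<sigma> (1 + 3 * ln (real (card S) - 1))"
proof -
  let ?L = "ln (real (card S) - 1)"
  have "0 < ln (3 :: real)" by simp
  have "ln 3 \<le> ?L" using card_S_ge_4 by simp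
  consider "\<sigma> = \<sigma>3" | "\<sigma> = \<sigma>2" | "\<sigma> = \<sigma>1" using assms by blast
  then show ?thesis
  proof cases
    case 1
    have "3/4 \<le> 1 + 3 * ?L" using \<open>0 < ln 3\<close> \<open>ln 3 \<le> ?L\<close> by linarith
    then show ?thesis unfolding 1 by (rule dominant_within_mono[OF dominant_within_\<sigma>3])
  next
    case 2
    have "2 * ln 3 + 3/4 \<le> 1 + 3 * ?L" using \<open>0 < ln 3\<close> \<open>ln 3 \<le> ?L\<close> by linarith
    then show ?thesis unfolding 2 by (rule dominant_within_mono[OF dominant_within_\<sigma>2])
  next
    case 3
    consider "\<sigma>2 - \<sigma>1 > 2 * ln 3 \<or> \<sigma>3 - \<sigma>2 > 2 * ln 3"
      | "\<sigma>2 - \<sigma>1 \<le> 2 * ln 3" "\<sigma>3 - \<sigma>2 \<le> 2 * ln 3" "card S \<ge> 5"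
      | "\<sigma>2 - \<sigma>1 \<le> 2 * ln 3" "\<sigma>3 - \<sigma>2 \<le> 2 * ln 3" "card S = 4"
      using card_S_ge_4 by linarith
    then show ?thesis
    proof cases
      case long_gap: 1
      have "3 * ln 3 + 1/2 \<le> 1 + 3 * ?L" using \<open>ln 3 \<le> ?L\<close> by linarith
      then show ?thesis unfolding 3
        by (rule dominant_within_mono[OF dominant_within_\<sigma>1_long_gap[OF long_gap]])
    next
      case short_gaps: 2
      then have "ln 4 \<le> ?L" by simp
      then have "4 * ln 3 + 3/4 \<le> 1 + 3 * ?L" using ln_four_bound by linarith
      then show ?thesis unfolding 3
        by (rule dominant_within_mono[OF dominant_within_\<sigma>1_short_gaps[OF short_gaps(1,2)]])
    next
      case four_terms: 3
      then have "S = {V0, V1, V2, V3}"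
        using V_less card_subset_eq[OF finite_S V_in_S] by auto
      moreover have "1 + 3 * ln 3 \<le> 1 + 3 * ?L" using \<open>ln 3 \<le> ?L\<close> by linarith
      ultimately show ?thesis unfolding 3
        by (rule dominant_within_mono[OF dominant_within_\<sigma>1_four_terms[OF _ four_terms(1,2)]])
    qed
  qed
qed

end

lemma trop_term_mirror: "trop_term (\<lambda>i. w (- i)) j v = trop_term w (- j) (- v)"
  unfolding trop_term_def by simp

lemma max_term_mirror: "max_term (uminus ` S) (\<lambda>i. w (- i)) v j \<longleftrightarrow> max_term S w (- v) (- j)"
  unfolding max_term_def trop_term_mirror by (auto simp: image_iff) (metis minus_minus)+

lemma breakpoints_mirror: "breakpoints (uminus ` S) (\<lambda>i. w (- i)) = uminus ` breakpoints S w"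
proof -
  have "v \<in> breakpoints (uminus ` S) (\<lambda>i. w (- i)) \<longleftrightarrow> - v \<in> breakpoints S w" for v
    unfolding breakpoints_def max_term_mirror mem_Collect_eq
  proof
    assume "\<exists>i j. i \<noteq> j \<and> max_term S w (- v) (- i) \<and> max_term S w (- v) (- j)"
    then obtain i j where "i \<noteq> j" "max_term S w (- v) (- i)" "max_term S w (- v) (- j)" by blast
    then show "\<exists>i j. i \<noteq> j \<and> max_term S w (- v) i \<and> max_term S w (- v) j"
      by (intro exI[of _ "- i"] exI[of _ "- j"]) simp
  next
    assume "\<exists>i j. i \<noteq> j \<and> max_term S w (- v) i \<and> max_term S w (- v) j"
    then obtain i j where "i \<noteq> j" "max_term S w (- v) i" "max_term S w (- v) j" by blast
    then show "\<exists>i j. i \<noteq> j \<and> max_term S w (- v) (- i) \<and> max_term S w (- v) (- j)"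
      by (intro exI[of _ "- i"] exI[of _ "- j"]) simp
  qed
  then show ?thesis by (force simp: image_iff)
qed

lemma dominant_term_mirror:
  "dominant_term (uminus ` S) (\<lambda>i. w (- i)) v j \<longleftrightarrow> dominant_term S w (- v) (- j)"
proof -
  have "uminus ` S - {j} = uminus ` (S - {- j})" by auto
  then have "(\<Sum>i\<in>uminus ` S - {j}. exp (trop_term (\<lambda>i. w (- i)) i v))
      = (\<Sum>i\<in>S - {- j}. exp (trop_term w i (- v)))"
    by (simp add: sum.reindex inj_on_def trop_term_mirror)
  moreover have "j \<in> uminus ` S \<longleftrightarrow> - j \<in> S" by force
  ultimately show ?thesis unfolding dominant_term_def by (simp add: trop_term_mirror)
qed

lemma card_3_obtain_sorted:
  fixes A :: "'a::linorder set"
  assumes "card A = 3"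
  obtains a b c where "A = {a, b, c}" "a < b" "b < c"
proof -
  have "finite A" using assms by (metis card.infinite zero_neq_numeral)
  obtain xs where xs: "sorted_list_of_set A = xs" by blast
  then have "length xs = 3" using assms by (simp flip: xs)
  then obtain a b c where abc: "sorted_list_of_set A = [a, b, c]"
    unfolding xs by (auto simp: numeral_3_eq_3 length_Suc_conv)
  then have "sorted_wrt (<) [a, b, c]" by (metis strict_sorted_list_of_set)
  moreover have "A = {a, b, c}" using abc set_sorted_list_of_set[OF \<open>finite A\<close>] by simp
  ultimately show thesis using that by simp
qed

lemma dominant_terms_around_breakpoint:
  assumes "finite S" "card (breakpoints S w) = 3" "\<sigma> \<in> breakpoints S w"
  obtains u u' k k' where "u < \<sigma>" "\<sigma> < u'"
    "\<sigma> - u \<le> 1 + 3 * ln (real (card S) - 1)" "u' - \<sigma> \<le> 1 + 3 * ln (real (card S) - 1)"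
    "dominant_term S w u k" "dominant_term S w u' k'"
proof -
  obtain \<sigma>1 \<sigma>2 \<sigma>3 where bp: "breakpoints S w = {\<sigma>1, \<sigma>2, \<sigma>3}" "\<sigma>1 < \<sigma>2" "\<sigma>2 < \<sigma>3"
    using card_3_obtain_sorted[OF assms(2)] by blast
  interpret right: three_breakpoints S w \<sigma>1 \<sigma>2 \<sigma>3
    using assms(1) bp by unfold_locales
  have "\<sigma> \<in> {\<sigma>1, \<sigma>2, \<sigma>3}" using assms(3) bp(1) by simp
  then obtain u' k' where u': "\<sigma> < u'" "u' \<le> \<sigma> + (1 + 3 * ln (real (card S) - 1))"
      "dominant_term S w u' k'"
    using right.dominant_within_breakpoint unfolding right.dominant_within_def by blast
  interpret left: three_breakpoints "uminus ` S" "\<lambda>i. w (- i)" "- \<sigma>3" "- \<sigma>2" "- \<sigma>1"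
    using assms(1) bp by unfold_locales (auto simp: breakpoints_mirror)
  have "card (uminus ` S) = card S" by (simp add: card_image)
  moreover have "- \<sigma> \<in> {- \<sigma>3, - \<sigma>2, - \<sigma>1}" using \<open>\<sigma> \<in> {\<sigma>1, \<sigma>2, \<sigma>3}\<close> by auto
  ultimately obtain v k where "- \<sigma> < v" "v \<le> - \<sigma> + (1 + 3 * ln (real (card S) - 1))"
      "dominant_term (uminus ` S) (\<lambda>i. w (- i)) v k"
    using left.dominant_within_breakpoint unfolding left.dominant_within_def by metis
  with u' show thesis using that[of "- v" u' "- k" k'] by (simp add: dominant_term_mirror)
qed

definition trop_support :: "complex poly \<Rightarrow> int set" where
  "trop_support f = int ` supp f"

definition trop_weight :: "complex poly \<Rightarrow> int \<Rightarrow> real" where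
  "trop_weight f i = ln (cmod (coeff f (nat i)))"

lemma finite_supp: "finite (supp f)"
proof -
  have "supp f \<subseteq> {..degree f}" unfolding supp_def using le_degree by auto
  then show ?thesis using finite_subset by blast
qed

lemma card_trop_support: "card (trop_support f) = card (supp f)"
  unfolding trop_support_def by (simp add: card_image)

text \<open>The maximizers of a linear functional on \<open>convex hull X\<close> form a face, which is the
  convex hull of the points of \<open>X\<close> it contains.\<close>
lemma two_maximizers_on_convex_hull_iff:
  fixes X :: "'a::euclidean_space set"
  assumes "finite X"
  shows "(\<exists>p\<in>convex hull X. \<exists>q\<in>convex hull X. p \<noteq> q \<and>
            (\<forall>r\<in>convex hull X. a \<bullet> r \<le> a \<bullet> p) \<and> (\<forall>r\<in>convex hull X. a \<bullet> r \<le> a \<bullet> q)) \<longleftrightarrow>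
         (\<exists>x\<in>X. \<exists>y\<in>X. x \<noteq> y \<and> (\<forall>z\<in>X. a \<bullet> z \<le> a \<bullet> x) \<and> (\<forall>z\<in>X. a \<bullet> z \<le> a \<bullet> y))"
    (is "?hull \<longleftrightarrow> ?points")
proof
  assume ?hull
  then obtain p q where pq: "p \<in> convex hull X" "q \<in> convex hull X" "p \<noteq> q"
    "\<forall>r\<in>convex hull X. a \<bullet> r \<le> a \<bullet> p" "\<forall>r\<in>convex hull X. a \<bullet> r \<le> a \<bullet> q"
    by blast
  let ?F = "convex hull X \<inter> {r. a \<bullet> r = a \<bullet> p}"
  have "?F face_of convex hull X"
    using pq(4) by (intro face_of_Int_supporting_hyperplane_le) auto
  then obtain X' where X': "X' \<subseteq> X" "?F = convex hull X'"
    using face_of_convex_hull_subset finite_imp_compact[OF assms] by metis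
  have "a \<bullet> q = a \<bullet> p" using pq(1,2,4,5) by (simp add: order_antisym)
  then have "p \<in> convex hull X'" "q \<in> convex hull X'"
    using pq(1,2) X'(2) by blast+
  then have "X' \<noteq> {}" by auto
  then obtain x where "x \<in> X'" by blast
  moreover obtain y where "y \<in> X'" "y \<noteq> x"
  proof (rule ccontr)
    assume "\<not> thesis"
    then have "X' \<subseteq> {x}" using that by blast
    then have "convex hull X' \<subseteq> {x}" using hull_mono[of X' "{x}" convex] by simp
    then show False using \<open>p \<in> convex hull X'\<close> \<open>q \<in> convex hull X'\<close> pq(3) by blast
  qed
  moreover have "x \<in> X" "y \<in> X" using X'(1) \<open>x \<in> X'\<close> \<open>y \<in> X'\<close> by auto
  moreover have "a \<bullet> z = a \<bullet> p" if "z \<in> X'" for z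
  proof -
    have "z \<in> ?F" unfolding X'(2) using that by (rule hull_inc)
    then show ?thesis by simp
  qed
  moreover have "a \<bullet> z \<le> a \<bullet> p" if "z \<in> X" for z
    using pq(4) hull_inc[OF that] by simp
  ultimately show ?points by (intro bexI[of _ x] bexI[of _ y] conjI ballI) simp_all
next
  have hull_le: "a \<bullet> r \<le> a \<bullet> x" if "\<forall>z\<in>X. a \<bullet> z \<le> a \<bullet> x" "r \<in> convex hull X" for x r
  proof -
    have "convex hull X \<subseteq> {r. a \<bullet> r \<le> a \<bullet> x}"
      using that(1) by (intro hull_minimal) (auto simp: convex_halfspace_le)
    then show ?thesis using that(2) by blast
  qed
  assume ?points
  then obtain x y where "x \<in> X" "y \<in> X" "x \<noteq> y"
      "\<forall>z\<in>X. a \<bullet> z \<le> a \<bullet> x" "\<forall>z\<in>X. a \<bullet> z \<le> a \<bullet> y"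
    by blast
  moreover have "x \<in> convex hull X" "y \<in> convex hull X"
    using \<open>x \<in> X\<close> \<open>y \<in> X\<close> by (simp_all add: hull_inc)
  ultimately show ?hull using hull_le by blast
qed

lemma ArchTrop_eq_breakpoints: "ArchTrop f = breakpoints (trop_support f) (trop_weight f)"
proof (rule set_eqI)
  fix v :: real
  let ?S = "trop_support f" and ?w = "trop_weight f"
  define P where "P i = (real i, - ln (cmod (coeff f i)))" for i
  let ?a = "(v, -1 :: real)"
  have phi: "v * fst r - snd r = ?a \<bullet> r" for r :: "real \<times> real"
    by (cases r) (simp add: inner_prod_def)
  have term_eq: "trop_term ?w (int i) v = ?a \<bullet> P i" for i
    unfolding trop_term_def trop_weight_def P_def by (simp add: inner_prod_def)
  have "inj P" unfolding P_def inj_def by simp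
  have max_term_iff: "max_term ?S ?w v (int i) \<longleftrightarrow>
      P i \<in> P ` supp f \<and> (\<forall>z\<in>P ` supp f. ?a \<bullet> z \<le> ?a \<bullet> P i)" for i
    unfolding max_term_def trop_support_def using \<open>inj P\<close> by (auto simp: term_eq inj_image_mem_iff)
  have "v \<in> ArchTrop f \<longleftrightarrow> (\<exists>x\<in>P ` supp f. \<exists>y\<in>P ` supp f. x \<noteq> y \<and>
      (\<forall>z\<in>P ` supp f. ?a \<bullet> z \<le> ?a \<bullet> x) \<and> (\<forall>z\<in>P ` supp f. ?a \<bullet> z \<le> ?a \<bullet> y))"
    unfolding ArchTrop_def ArchNewt_def mem_Collect_eq phi P_def[symmetric]
    by (rule two_maximizers_on_convex_hull_iff) (simp add: finite_supp)
  also have "\<dots> \<longleftrightarrow> v \<in> breakpoints ?S ?w" (is "?points \<longleftrightarrow> _")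
  proof
    assume ?points
    then obtain i j where "i \<in> supp f" "j \<in> supp f" "P i \<noteq> P j"
        "\<forall>z\<in>P ` supp f. ?a \<bullet> z \<le> ?a \<bullet> P i" "\<forall>z\<in>P ` supp f. ?a \<bullet> z \<le> ?a \<bullet> P j"
      by blast
    then show "v \<in> breakpoints ?S ?w"
      unfolding breakpoints_def by (intro CollectI exI[of _ "int i"] exI[of _ "int j"]) (auto simp: max_term_iff)
  next
    assume "v \<in> breakpoints ?S ?w"
    then obtain i j where "int i \<noteq> int j" "max_term ?S ?w v (int i)" "max_term ?S ?w v (int j)"
      unfolding breakpoints_def max_term_def trop_support_def by blast
    then show ?points using \<open>inj P\<close> unfolding max_term_iff by (metis inj_eq of_nat_eq_iff)
  qed
  finally show "v \<in> ArchTrop f \<longleftrightarrow> v \<in> breakpoints ?S ?w" .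
qed

lemma poly_eq_sum_supp: "poly f y = (\<Sum>m\<in>supp f. coeff f m * y ^ m)"
proof -
  have "poly f y = (\<Sum>m\<le>degree f. coeff f m * y ^ m)" by (rule poly_altdef)
  also have "\<dots> = (\<Sum>m\<in>supp f. coeff f m * y ^ m)"
    by (rule sum.mono_neutral_right) (auto simp: supp_def le_degree)
  finally show ?thesis .
qed

lemma dominant_monomial_if_dominant_term:
  assumes "dominant_term (trop_support f) (trop_weight f) u k"
  obtains n where "k = int n"
    "\<And>y. norm y = exp u \<Longrightarrow> norm (poly f y - coeff f n * y ^ n) < norm (coeff f n * y ^ n)"
proof -
  obtain n where n: "n \<in> supp f" "k = int n"
    using assms unfolding dominant_term_def trop_support_def by auto
  have exp_term: "exp (trop_term (trop_weight f) (int m) u) = cmod (coeff f m) * exp u ^ m"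
    if "m \<in> supp f" for m
    using that unfolding trop_term_def trop_weight_def supp_def
    by (simp add: exp_add exp_of_nat_mult)
  have "trop_support f - {k} = int ` (supp f - {n})" unfolding trop_support_def n(2) by auto
  then have "(\<Sum>j\<in>trop_support f - {k}. exp (trop_term (trop_weight f) j u))
      = (\<Sum>m\<in>supp f - {n}. cmod (coeff f m) * exp u ^ m)"
    by (simp add: sum.reindex exp_term)
  then have less: "(\<Sum>m\<in>supp f - {n}. cmod (coeff f m) * exp u ^ m) < cmod (coeff f n) * exp u ^ n"
    using assms exp_term[OF n(1)] unfolding dominant_term_def n(2) by simp
  show thesis
  proof (rule that[OF n(2)])
    fix y :: complex assume y: "norm y = exp u"
    have "poly f y - coeff f n * y ^ n = (\<Sum>m\<in>supp f - {n}. coeff f m * y ^ m)"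
      unfolding poly_eq_sum_supp using n(1) finite_supp by (simp add: sum.remove)
    then have "norm (poly f y - coeff f n * y ^ n) \<le> (\<Sum>m\<in>supp f - {n}. cmod (coeff f m) * exp u ^ m)"
      using norm_sum[of "\<lambda>m. coeff f m * y ^ m" "supp f - {n}"] y by (simp add: norm_mult norm_power)
    also have "\<dots> < norm (coeff f n * y ^ n)" using less y by (simp add: norm_mult norm_power)
    finally show "norm (poly f y - coeff f n * y ^ n) < norm (coeff f n * y ^ n)" .
  qed
qed

lemma amoeba_point_near_ArchTrop:
  assumes "card (supp f) = t" "card (ArchTrop f) = 3" "\<sigma> \<in> ArchTrop f"
  shows "\<exists>\<rho>\<in>Amoeba f. \<bar>\<rho> - \<sigma>\<bar> \<le> 1 + 3 * ln (real t - 1)"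
proof -
  let ?S = "trop_support f" and ?w = "trop_weight f"
  have "finite ?S" unfolding trop_support_def using finite_supp by simp
  obtain u u' k k' where uu': "u < \<sigma>" "\<sigma> < u'" "\<sigma> - u \<le> 1 + 3 * ln (real t - 1)"
      "u' - \<sigma> \<le> 1 + 3 * ln (real t - 1)"
    and dominant: "dominant_term ?S ?w u k" "dominant_term ?S ?w u' k'"
    using dominant_terms_around_breakpoint[OF \<open>finite ?S\<close>] assms
    unfolding ArchTrop_eq_breakpoints card_trop_support by metis
  have "k \<noteq> k'"
    using assms(3) unfolding ArchTrop_eq_breakpoints
    by (rule strict_max_terms_differ_across_breakpoint[OF _ uu'(1,2)
          strict_max_term_if_dominant[OF \<open>finite ?S\<close> dominant(1)]
          strict_max_term_if_dominant[OF \<open>finite ?S\<close> dominant(2)]])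
  obtain n where "k = int n"
    and n: "\<And>y. norm y = exp u \<Longrightarrow> norm (poly f y - coeff f n * y ^ n) < norm (coeff f n * y ^ n)"
    using dominant_monomial_if_dominant_term[OF dominant(1)] by blast
  obtain n' where "k' = int n'"
    and n': "\<And>y. norm y = exp u' \<Longrightarrow> norm (poly f y - coeff f n' * y ^ n') < norm (coeff f n' * y ^ n')"
    using dominant_monomial_if_dominant_term[OF dominant(2)] by blast
  have "exp u < exp u'" "n \<noteq> n'" using uu'(1,2) \<open>k \<noteq> k'\<close> \<open>k = int n\<close> \<open>k' = int n'\<close> by auto
  then obtain z where z: "poly f z = 0" "exp u \<le> norm z" "norm z \<le> exp u'"
    using root_between_dominant_monomials[OF exp_gt_zero _ _ n n'] by blast
  then have "z \<noteq> 0" by auto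
  have "u \<le> ln (norm z)" using z(2) \<open>z \<noteq> 0\<close> by (simp add: ln_ge_iff)
  moreover have "ln (norm z) \<le> ln (exp u')" using z(3) \<open>z \<noteq> 0\<close> by (subst ln_le_cancel_iff) auto
  moreover have "ln (norm z) \<in> Amoeba f" unfolding Amoeba_def using z(1) \<open>z \<noteq> 0\<close> by blast
  ultimately show ?thesis using uu' by (intro bexI[of _ "ln (norm z)"]) auto
qed

theorem corollary3p3:
  fixes f :: "complex poly" and t :: nat
  assumes "card (supp f) = t"
    and "card (ArchTrop f) = 3"
  shows "(SUP \<sigma>\<in>ArchTrop f. INF \<rho>\<in>Amoeba f. \<bar>\<rho> - \<sigma>\<bar>) \<le> 1 + 3 * ln (real t - 1)"
proof (rule cSUP_least)
  show "ArchTrop f \<noteq> {}" using assms(2) by auto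
  fix \<sigma> assume "\<sigma> \<in> ArchTrop f"
  then obtain \<rho> where "\<rho> \<in> Amoeba f" "\<bar>\<rho> - \<sigma>\<bar> \<le> 1 + 3 * ln (real t - 1)"
    using amoeba_point_near_ArchTrop[OF assms] by blast
  moreover have "(INF \<rho>\<in>Amoeba f. \<bar>\<rho> - \<sigma>\<bar>) \<le> \<bar>\<rho> - \<sigma>\<bar>"
    using \<open>\<rho> \<in> Amoeba f\<close> by (intro cINF_lower bdd_belowI[of _ 0]) auto
  ultimately show "(INF \<rho>\<in>Amoeba f. \<bar>\<rho> - \<sigma>\<bar>) \<le> 1 + 3 * ln (real t - 1)" by simp
qed

end
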